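(* Let $\mathbb{F}$ be any field of characteristic zero, let $G=\langle S\rangle\le\mathrm{GL}(n,\mathbb{F})$ with $S$ finite, let $R$ be the subring of $\mathbb{F}$ generated by the entries of the matrices in $S\cup S^{-1}$, and let $\psi_\rho$ be an SW-homomorphism on $\mathrm{GL}(n,R)$. Then $G$ is central-by-finite if and only if $G_\rho$ is central in $G$.
   Context: For an ideal $\rho$ of $R$, $\psi_\rho:\mathrm{GL}(n,R)\to\mathrm{GL}(n,R/\rho)$ is the homomorphism induced by the natural projection $R\to R/\rho$, and $G_\rho$ is the kernel of $\psi_\rho$ on $G$. $\psi_\rho$ is an SW-homomorphism if $R/\rho$ is finite (so $\psi_\rho$ has finite image) and every element of finite order in the kernel of $\psi_\rho$ on $\mathrm{GL}(n,R)$ is unipotent. $G$ is central-by-finite if its centre has finite index in $G$. *)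

theory Defs
  imports "HOL-Analysis.Analysis"
begin

(* Matrices over a field: 'a^'n^'n, with the finite type 'n indexing {1..n}. *)

primrec mpow :: "'a::semiring_1^'n^'n \<Rightarrow> nat \<Rightarrow> 'a^'n^'n" where
  "mpow A 0 = mat 1"
| "mpow A (Suc k) = A ** mpow A k"

definition GL_field :: "('a::field^'n^'n) set" where
  "GL_field = {A. invertible A}"

definition subring_gen :: "'a::comm_ring_1 set \<Rightarrow> 'a set" where
  "subring_gen X = \<Inter> {T. X \<subseteq> T \<and> 1 \<in> T \<and> (\<forall>x\<in>T. \<forall>y\<in>T. x + y \<in> T \<and> x - y \<in> T \<and> x * y \<in> T)}"

definition group_gen :: "('a::field^'n^'n) set \<Rightarrow> ('a^'n^'n) set" where
  "group_gen S = \<Inter> {H. S \<subseteq> H \<and> mat 1 \<in> H \<and>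
      (\<forall>x\<in>H. \<forall>y\<in>H. x ** y \<in> H) \<and> (\<forall>x\<in>H. matrix_inv x \<in> H)}"

definition entries :: "('a^'n^'n) set \<Rightarrow> 'a set" where
  "entries M = {A $ i $ j | A i j. A \<in> M}"

definition GL_ring :: "'a::field set \<Rightarrow> ('a^'n^'n) set" where
  "GL_ring R = {A. invertible A \<and> (\<forall>i j. A $ i $ j \<in> R) \<and> (\<forall>i j. matrix_inv A $ i $ j \<in> R)}"

definition is_ideal :: "'a::comm_ring_1 set \<Rightarrow> 'a set \<Rightarrow> bool" where
  "is_ideal R \<rho> \<longleftrightarrow> \<rho> \<subseteq> R \<and> 0 \<in> \<rho> \<and> (\<forall>x\<in>\<rho>. \<forall>y\<in>\<rho>. x + y \<in> \<rho> \<and> - x \<in> \<rho>)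
      \<and> (\<forall>r\<in>R. \<forall>x\<in>\<rho>. r * x \<in> \<rho>)"

definition quot_ring_carrier :: "'a::comm_ring_1 set \<Rightarrow> 'a set \<Rightarrow> 'a set set" where
  "quot_ring_carrier R \<rho> = (\<lambda>x. {y \<in> R. x - y \<in> \<rho>}) ` R"

definition psi_kernel :: "'a::comm_ring_1 set \<Rightarrow> ('a^'n^'n) set \<Rightarrow> ('a^'n^'n) set" where
  "psi_kernel \<rho> M = {A \<in> M. \<forall>i j. A $ i $ j - mat 1 $ i $ j \<in> \<rho>}"

definition finite_order :: "'a::semiring_1^'n^'n \<Rightarrow> bool" where
  "finite_order A \<longleftrightarrow> (\<exists>k>0. mpow A k = mat 1)"

definition unipotent :: "'a::comm_ring_1^'n^'n \<Rightarrow> bool" where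
  "unipotent A \<longleftrightarrow> (\<exists>k. mpow (A - mat 1) k = 0)"

definition SW_hom :: "'a::field set \<Rightarrow> 'a set \<Rightarrow> ('n::finite) itself \<Rightarrow> bool" where
  "SW_hom R \<rho> _ \<longleftrightarrow> finite (quot_ring_carrier R \<rho>) \<and>
     (\<forall>A \<in> psi_kernel \<rho> (GL_ring R :: ('a^'n^'n) set). finite_order A \<longrightarrow> unipotent A)"

definition centre :: "('a::semiring_1^'n^'n) set \<Rightarrow> ('a^'n^'n) set" where
  "centre G = {z \<in> G. \<forall>g\<in>G. z ** g = g ** z}"

(* G is central-by-finite: its centre has finite index (finitely many cosets gZ) *)
definition central_by_finite :: "('a::semiring_1^'n^'n) set \<Rightarrow> bool" where
  "central_by_finite G \<longleftrightarrow> finite ((\<lambda>g. (\<lambda>z. g ** z) ` centre G) ` G)"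

end

theory Submission
  imports Defs "HOL-Algebra.Left_Coset" "HOL-Algebra.FiniteProduct"
begin

(* If the centre Z of a group has finite index m, the transfer V : G \<rightarrow> Z is a homomorphism
   into an abelian group with V z = z^m on Z; it therefore kills commutators, and since some
   power of every element lies in Z, every commutator has finite order (Schur).  For g \<in> G_\<rho>
   and h \<in> G the commutator [g, h] lies in the congruence kernel of GL(n, R), so by the
   SW-property it is unipotent, and a unipotent matrix of finite order in characteristic zero
   is the identity; hence G_\<rho> is central.  Conversely, if G_\<rho> is central then the coset gZ
   only depends on the reduction of g modulo \<rho>, of which there are finitely many. *)

subsection \<open>The centre and the transfer\<close>

definition center :: "('a, 'b) monoid_scheme \<Rightarrow> 'a set" where
  "center G = {z \<in> carrier G. \<forall>x \<in> carrier G. z \<otimes>\<^bsub>G\<^esub> x = x \<otimes>\<^bsub>G\<^esub> z}"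

context group
begin

lemma center_commute: "z \<in> center G \<Longrightarrow> x \<in> carrier G \<Longrightarrow> z \<otimes> x = x \<otimes> z"
  by (simp add: center_def)

lemma inv_commute:
  assumes "x \<in> carrier G" "y \<in> carrier G" "x \<otimes> y = y \<otimes> x"
  shows "inv x \<otimes> y = y \<otimes> inv x"
  by (metis assms inv_closed inv_solve_left inv_solve_right' m_assoc m_closed)

lemma center_subgroup: "subgroup (center G) G"
proof (rule subgroupI)
  show "center G \<subseteq> carrier G" "center G \<noteq> {}"
    by (auto simp: center_def)
  show "inv z \<in> center G" if z: "z \<in> center G" for z
  proof -
    have "z \<in> carrier G" using z by (simp add: center_def)
    then show ?thesis
      unfolding center_def using center_commute[OF z] inv_commute by blast
  qed
  show "z \<otimes> w \<in> center G" if z: "z \<in> center G" and w: "w \<in> center G" for z w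
  proof -
    have zw: "z \<in> carrier G" "w \<in> carrier G"
      using z w by (auto simp: center_def)
    have "z \<otimes> w \<otimes> x = x \<otimes> (z \<otimes> w)" if x: "x \<in> carrier G" for x
    proof -
      have "z \<otimes> w \<otimes> x = z \<otimes> (x \<otimes> w)"
        using zw x by (simp add: m_assoc center_commute[OF w x])
      also have "\<dots> = (x \<otimes> z) \<otimes> w"
        using zw x by (simp add: m_assoc[symmetric] center_commute[OF z x])
      also have "\<dots> = x \<otimes> (z \<otimes> w)"
        using zw x by (simp add: m_assoc)
      finally show ?thesis .
    qed
    then show ?thesis
      unfolding center_def using zw by blast
  qed
qed

lemma center_comm_group: "comm_group (G\<lparr>carrier := center G\<rparr>)"
proof (rule group.group_comm_groupI)
  show "group (G\<lparr>carrier := center G\<rparr>)"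
    by (rule subgroup.subgroup_is_group[OF center_subgroup is_group])
  fix x y assume "x \<in> carrier (G\<lparr>carrier := center G\<rparr>)" "y \<in> carrier (G\<lparr>carrier := center G\<rparr>)"
  then have "x \<in> center G" "y \<in> carrier G"
    by (auto simp: center_def)
  then have "x \<otimes> y = y \<otimes> x"
    by (rule center_commute)
  then show "x \<otimes>\<^bsub>G\<lparr>carrier := center G\<rparr>\<^esub> y = y \<otimes>\<^bsub>G\<lparr>carrier := center G\<rparr>\<^esub> x"
    by simp
qed

lemma l_coset_eq_iff:
  assumes "subgroup H G" "a \<in> carrier G" "b \<in> carrier G"
  shows "l_coset G a H = l_coset G b H \<longleftrightarrow> inv a \<otimes> b \<in> H"
proof
  assume "l_coset G a H = l_coset G b H"
  then have "b \<in> l_coset G a H" using lcos_self[OF assms(3,1)] by simp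
  then show "inv a \<otimes> b \<in> H" using subgroup.lcos_module_imp[OF assms(1) is_group assms(2)] by blast
next
  assume "inv a \<otimes> b \<in> H"
  then have "b \<in> l_coset G a H" using subgroup.lcos_module_rev[OF assms(1) is_group assms(2,3)] by blast
  then show "l_coset G a H = l_coset G b H" using l_repr_independence assms by blast
qed

lemma commute_if_commutator_eq_one:
  assumes "g \<in> carrier G" "h \<in> carrier G" "g \<otimes> h \<otimes> inv g \<otimes> inv h = \<one>"
  shows "g \<otimes> h = h \<otimes> g"
  using assms by (simp add: inv_solve_right')

lemma pow_mem_subgroup_of_finite_index:
  assumes H: "subgroup H G" and fin: "finite (lcosets H)" and x: "x \<in> carrier G"
  obtains r :: nat where "r > 0" "x [^] r \<in> H"
proof -
  define f where "f i = l_coset G (x [^] i) H" for i :: nat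
  have "range f \<subseteq> lcosets H"
    using x by (auto simp: f_def LCOSETS_def)
  then have "\<not> inj f"
    using fin finite_subset infinite_UNIV_nat finite_imageD by blast
  then obtain i' j' :: nat where "i' \<noteq> j'" "f i' = f j'"
    unfolding inj_def by blast
  define i j where "i = min i' j'" and "j = max i' j'"
  have "i < j" "f i = f j"
    using \<open>i' \<noteq> j'\<close> \<open>f i' = f j'\<close> by (auto simp: i_def j_def min_def max_def)
  then have "inv (x [^] i) \<otimes> x [^] j \<in> H"
    using l_coset_eq_iff H x by (simp add: f_def)
  moreover have "inv (x [^] i) \<otimes> x [^] j = x [^] (j - i)"
    using \<open>i < j\<close> x by (simp add: inv_solve_left' nat_pow_mult)
  ultimately show ?thesis using that[of "j - i"] \<open>i < j\<close> by simp
qed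

end

lemma (in comm_group) commutator_eq_one:
  assumes "x \<in> carrier G" "y \<in> carrier G"
  shows "x \<otimes> y \<otimes> inv x \<otimes> inv y = \<one>"
proof -
  have "x \<otimes> y \<otimes> inv x \<otimes> inv y = (x \<otimes> y) \<otimes> inv (x \<otimes> y)"
    using assms by (simp add: inv_mult m_assoc)
  then show ?thesis using assms by simp
qed

locale finite_index_center = group +
  assumes finite_center_cosets: "finite (lcosets (center G))"
begin

abbreviation center_group :: "('a, 'b) monoid_scheme" where
  "center_group \<equiv> G\<lparr>carrier := center G\<rparr>"

sublocale Z: comm_group center_group
  by (rule center_comm_group)

definition transversal :: "'a set \<Rightarrow> 'a" where
  "transversal X = inv_into (carrier G) (\<lambda>a. l_coset G a (center G)) X"

lemma transversal:
  assumes "X \<in> lcosets (center G)"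
  shows "transversal X \<in> carrier G" "l_coset G (transversal X) (center G) = X"
proof -
  have X: "X \<in> (\<lambda>a. l_coset G a (center G)) ` carrier G"
    using assms unfolding LCOSETS_def by blast
  show "transversal X \<in> carrier G"
    unfolding transversal_def using X by (rule inv_into_into)
  show "l_coset G (transversal X) (center G) = X"
    unfolding transversal_def using X by (rule f_inv_into_f)
qed

lemma lcosets_center_subset: "X \<in> lcosets (center G) \<Longrightarrow> X \<subseteq> carrier G"
  using subgroup.lcosets_carrier[OF center_subgroup is_group] by blast

lemma l_coset_lcosets_center:
  "x \<in> carrier G \<Longrightarrow> X \<in> lcosets (center G) \<Longrightarrow> l_coset G x X \<in> lcosets (center G)"
  using transversal[of X] by (auto simp: LCOSETS_def lcos_m_assoc center_def)

lemma bij_betw_l_coset_lcosets_center: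
  assumes "x \<in> carrier G"
  shows "bij_betw (l_coset G x) (lcosets (center G)) (lcosets (center G))"
proof (rule bij_betw_byWitness[where f' = "l_coset G (inv x)"])
  show "\<forall>X \<in> lcosets (center G). l_coset G (inv x) (l_coset G x X) = X"
    using assms by (simp add: lcos_m_assoc lcosets_center_subset lcos_mult_one)
  show "\<forall>X \<in> lcosets (center G). l_coset G x (l_coset G (inv x) X) = X"
    using assms by (simp add: lcos_m_assoc lcosets_center_subset lcos_mult_one)
qed (use assms l_coset_lcosets_center in auto)

definition transfer_factor :: "'a \<Rightarrow> 'a set \<Rightarrow> 'a" where
  "transfer_factor x X = inv (transversal (l_coset G x X)) \<otimes> x \<otimes> transversal X"

lemma transfer_factor_mem_center:
  assumes "x \<in> carrier G" "X \<in> lcosets (center G)"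
  shows "transfer_factor x X \<in> center G"
proof -
  let ?t = "transversal X" and ?t' = "transversal (l_coset G x X)"
  have t: "?t \<in> carrier G" "?t' \<in> carrier G"
    using assms transversal l_coset_lcosets_center by auto
  have "l_coset G ?t' (center G) = l_coset G x (l_coset G ?t (center G))"
    using assms transversal l_coset_lcosets_center by simp
  also have "\<dots> = l_coset G (x \<otimes> ?t) (center G)"
    using assms(1) t by (simp add: lcos_m_assoc subgroup.subset center_subgroup)
  finally have "inv ?t' \<otimes> (x \<otimes> ?t) \<in> center G"
    using t assms(1) l_coset_eq_iff[OF center_subgroup] by simp
  then show ?thesis using t assms(1) by (simp add: transfer_factor_def m_assoc)
qed

lemma transfer_factor_mult:
  assumes "x \<in> carrier G" "y \<in> carrier G" "X \<in> lcosets (center G)"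
  shows "transfer_factor (x \<otimes> y) X = transfer_factor x (l_coset G y X) \<otimes> transfer_factor y X"
proof -
  have "transversal (l_coset G (x \<otimes> y) X) \<in> carrier G"
    "transversal (l_coset G y X) \<in> carrier G" "transversal X \<in> carrier G"
    using assms transversal l_coset_lcosets_center by auto
  then show ?thesis
    using assms by (simp add: transfer_factor_def lcos_m_assoc lcosets_center_subset m_assoc)
      (simp add: m_assoc[symmetric])
qed

lemma transfer_factor_center:
  assumes "z \<in> center G" "X \<in> lcosets (center G)"
  shows "transfer_factor z X = z"
proof -
  have z: "z \<in> carrier G" using assms(1) by (simp add: center_def)
  have t: "transversal X \<in> carrier G" using transversal assms(2) by blast
  have Z: "center G \<subseteq> carrier G" by (simp add: subgroup.subset center_subgroup)
  have "l_coset G z X = l_coset G z (l_coset G (transversal X) (center G))"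
    using transversal[OF assms(2)] by simp
  also have "\<dots> = l_coset G (z \<otimes> transversal X) (center G)"
    using z t Z by (simp add: lcos_m_assoc)
  also have "\<dots> = l_coset G (transversal X) (l_coset G z (center G))"
    using z t Z center_commute[OF assms(1) t] by (simp add: lcos_m_assoc)
  also have "\<dots> = X"
    using transversal[OF assms(2)] z assms(1) by (simp add: coset_join3 center_subgroup)
  finally have "l_coset G z X = X" .
  then show ?thesis
    using z t center_commute[OF assms(1) t]
    by (simp add: transfer_factor_def m_assoc) (simp add: m_assoc[symmetric])
qed

lemma transfer_factor_Pi:
  "x \<in> carrier G \<Longrightarrow> transfer_factor x \<in> lcosets (center G) \<rightarrow> carrier center_group"
  using transfer_factor_mem_center by simp

definition transfer :: "'a \<Rightarrow> 'a" where
  "transfer x = finprod center_group (transfer_factor x) (lcosets (center G))"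

lemma transfer_mem_center: "x \<in> carrier G \<Longrightarrow> transfer x \<in> center G"
  using Z.finprod_closed[OF transfer_factor_Pi] by (simp add: transfer_def)

lemma transfer_shift:
  assumes "x \<in> carrier G" "y \<in> carrier G"
  shows "finprod center_group (\<lambda>X. transfer_factor x (l_coset G y X)) (lcosets (center G)) = transfer x"
proof -
  have inj: "inj_on (l_coset G y) (lcosets (center G))"
    and image: "l_coset G y ` (lcosets (center G)) = lcosets (center G)"
    using bij_betw_l_coset_lcosets_center[OF assms(2)] by (auto simp: bij_betw_def)
  have "finprod center_group (transfer_factor x) (l_coset G y ` (lcosets (center G)))
      = finprod center_group (\<lambda>X. transfer_factor x (l_coset G y X)) (lcosets (center G))"
    by (rule Z.finprod_reindex) (use transfer_factor_Pi[OF assms(1)] image inj in simp_all)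
  then show ?thesis using image by (simp add: transfer_def)
qed

lemma transfer_mult:
  assumes x: "x \<in> carrier G" and y: "y \<in> carrier G"
  shows "transfer (x \<otimes> y) = transfer x \<otimes> transfer y"
proof -
  have "transfer (x \<otimes> y) = finprod center_group
      (\<lambda>X. transfer_factor x (l_coset G y X) \<otimes>\<^bsub>center_group\<^esub> transfer_factor y X) (lcosets (center G))"
    unfolding transfer_def using x y transfer_factor_Pi l_coset_lcosets_center
    by (intro Z.finprod_cong')
      (auto simp: transfer_factor_mult intro!: subgroup.m_closed[OF center_subgroup] transfer_factor_mem_center)
  also have "\<dots> = finprod center_group (\<lambda>X. transfer_factor x (l_coset G y X)) (lcosets (center G))
      \<otimes>\<^bsub>center_group\<^esub> transfer y"
    unfolding transfer_def
    by (rule Z.finprod_multf) (use x y transfer_factor_Pi l_coset_lcosets_center in auto)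
  finally show ?thesis using transfer_shift[OF x y] by simp
qed

lemma transfer_hom: "group_hom G center_group transfer"
  using transfer_mult transfer_mem_center
  by (intro group_hom.intro group_hom_axioms.intro homI is_group Z.is_group) auto

lemma transfer_center:
  assumes "z \<in> center G"
  shows "transfer z = z [^] card (lcosets (center G))"
proof -
  have "transfer z = finprod center_group (\<lambda>X. z) (lcosets (center G))"
    unfolding transfer_def using assms by (intro Z.finprod_cong') (auto simp: transfer_factor_center)
  then show ?thesis using assms by (simp add: Z.finprod_const nat_pow_consistent[symmetric])
qed

lemma transfer_commutator:
  assumes "g \<in> carrier G" "h \<in> carrier G"
  shows "transfer (g \<otimes> h \<otimes> inv g \<otimes> inv h) = \<one>"
proof -
  interpret T: group_hom G center_group transfer by (rule transfer_hom)
  show ?thesis using assms T.hom_closed Z.commutator_eq_one[of "transfer g" "transfer h"] by simp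
qed

theorem commutator_finite_order:
  assumes "g \<in> carrier G" "h \<in> carrier G"
  obtains k :: nat where "k > 0" "(g \<otimes> h \<otimes> inv g \<otimes> inv h) [^] k = \<one>"
proof -
  interpret T: group_hom G center_group transfer by (rule transfer_hom)
  define c where "c = g \<otimes> h \<otimes> inv g \<otimes> inv h"
  have c: "c \<in> carrier G" using assms by (simp add: c_def)
  obtain r :: nat where "r > 0" and r: "c [^] r \<in> center G"
    using pow_mem_subgroup_of_finite_index[OF center_subgroup finite_center_cosets c] .
  have "c [^] (r * card (lcosets (center G))) = transfer (c [^] r)"
    using transfer_center[OF r] c by (simp add: nat_pow_pow)
  also have "\<dots> = \<one>"
    using T.hom_nat_pow c transfer_commutator[OF assms] by (simp add: c_def nat_pow_consistent[symmetric])
  finally have "c [^] (r * card (lcosets (center G))) = \<one>" .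
  moreover have "card (lcosets (center G)) > 0"
    using finite_center_cosets lcos_self[OF one_closed center_subgroup]
    by (auto simp: card_gt_0_iff LCOSETS_def)
  ultimately show ?thesis using that[of "r * card (lcosets (center G))"] \<open>r > 0\<close> by (simp add: c_def)
qed

end

lemma sum_mem:
  assumes "0 \<in> T" "\<And>x y. x \<in> T \<Longrightarrow> y \<in> T \<Longrightarrow> x + y \<in> T" "\<And>i. i \<in> I \<Longrightarrow> f i \<in> T"
  shows "sum f I \<in> T"
  using assms(3) by (induction I rule: infinite_finite_induct) (auto intro: assms(1,2))

lemma matrix_diff_ldistrib: "(A::'a::ring_1^'n^'m) ** (B - C) = A ** B - A ** C"
  by (vector matrix_matrix_mult_def sum_subtractf[symmetric] algebra_simps)

lemma matrix_diff_rdistrib: "((A::'a::ring_1^'n^'m) - B) ** C = A ** C - B ** C"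
  by (vector matrix_matrix_mult_def sum_subtractf[symmetric] algebra_simps)

lemma matrix_add_rdistrib: "((A::'a::semiring_1^'n^'m) + B) ** C = A ** C + B ** C"
  by (vector matrix_matrix_mult_def sum.distrib[symmetric] algebra_simps)

lemma matrix_mul_mat_component: "((A::'a::semiring_1^'n^'m) ** mat c) $ i $ j = A $ i $ j * c"
  by (simp add: matrix_matrix_mult_def mat_def if_distrib if_distribR sum.delta' cong: if_cong)

lemma mat_add: "mat a + mat b = (mat (a + b) :: 'a::semiring_1^'n^'n)"
  by (vector mat_def)

lemma matrix_inv:
  fixes A :: "'a::semiring_1^'n^'n"
  assumes "invertible A"
  shows "A ** matrix_inv A = mat 1" "matrix_inv A ** A = mat 1"
  using someI_ex[OF assms[unfolded invertible_def]] by (simp_all add: matrix_inv_def)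

lemma matrix_inv_eqI:
  fixes A B :: "'a::semiring_1^'n^'n"
  assumes "A ** B = mat 1" "B ** A = mat 1"
  shows "matrix_inv A = B"
proof -
  have "invertible A" using assms invertible_def by blast
  have "matrix_inv A = matrix_inv A ** (A ** B)"
    by (simp add: assms(1))
  also have "\<dots> = (matrix_inv A ** A) ** B"
    by (simp add: matrix_mul_assoc)
  finally show ?thesis by (simp add: matrix_inv \<open>invertible A\<close>)
qed

lemma invertible_matrix_inv:
  fixes A :: "'a::semiring_1^'n^'n"
  shows "invertible A \<Longrightarrow> invertible (matrix_inv A)"
  using matrix_inv invertible_def by blast

lemma matrix_inv_matrix_inv:
  fixes A :: "'a::semiring_1^'n^'n"
  shows "invertible A \<Longrightarrow> matrix_inv (matrix_inv A) = A"
  by (rule matrix_inv_eqI) (simp_all add: matrix_inv)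

lemma matrix_inv_mult:
  fixes A B :: "'a::semiring_1^'n^'n"
  assumes "invertible A" "invertible B"
  shows "matrix_inv (A ** B) = matrix_inv B ** matrix_inv A"
proof (rule matrix_inv_eqI)
  have "A ** B ** (matrix_inv B ** matrix_inv A) = A ** (B ** matrix_inv B) ** matrix_inv A"
    by (simp add: matrix_mul_assoc)
  then show "A ** B ** (matrix_inv B ** matrix_inv A) = mat 1"
    using assms by (simp add: matrix_inv)
  have "matrix_inv B ** matrix_inv A ** (A ** B) = matrix_inv B ** (matrix_inv A ** A) ** B"
    by (simp add: matrix_mul_assoc)
  then show "matrix_inv B ** matrix_inv A ** (A ** B) = mat 1"
    using assms by (simp add: matrix_inv)
qed

lemma invertible_mat_1: "invertible (mat 1 :: 'a::semiring_1^'n^'n)"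
  unfolding invertible_def by (rule exI[of _ "mat 1"]) simp

lemma matrix_inv_mat_1: "matrix_inv (mat 1 :: 'a::semiring_1^'n^'n) = mat 1"
  by (rule matrix_inv_eqI) simp_all

definition matrix_group :: "('a::semiring_1^'n^'n) set \<Rightarrow> ('a^'n^'n) monoid" where
  "matrix_group M = \<lparr>carrier = M, mult = (**), one = mat 1\<rparr>"

lemma matrix_group_simps [simp]:
  "carrier (matrix_group M) = M"
  "x \<otimes>\<^bsub>matrix_group M\<^esub> y = x ** y"
  "\<one>\<^bsub>matrix_group M\<^esub> = mat 1"
  "(matrix_group M)\<lparr>carrier := H\<rparr> = matrix_group H"
  by (simp_all add: matrix_group_def)

lemma nat_pow_matrix_group: "x [^]\<^bsub>matrix_group M\<^esub> (k::nat) = mpow x k"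
proof (induction k)
  case (Suc k)
  have "mpow x k ** x = mpow x (Suc k)"
    by (induction k) (simp_all add: matrix_mul_assoc[symmetric])
  then show ?case using Suc by simp
qed simp

lemma group_matrix_group_GL: "group (matrix_group (GL_field :: ('a::field^'n^'n) set))"
proof (rule groupI)
  fix x assume "x \<in> carrier (matrix_group GL_field)"
  then show "\<exists>y \<in> carrier (matrix_group GL_field). y \<otimes>\<^bsub>matrix_group GL_field\<^esub> x = \<one>\<^bsub>matrix_group GL_field\<^esub>"
    using invertible_matrix_inv matrix_inv by (auto simp: GL_field_def)
qed (auto simp: GL_field_def invertible_mult matrix_mul_assoc invertible_mat_1)

lemma inv_matrix_group_GL:
  fixes A :: "'a::field^'n^'n"
  assumes "A \<in> GL_field"
  shows "inv\<^bsub>matrix_group GL_field\<^esub> A = matrix_inv A"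
  using assms by (intro group.inv_equality[OF group_matrix_group_GL])
    (auto simp: GL_field_def matrix_inv invertible_matrix_inv)

lemma subgroup_matrix_groupI:
  fixes H :: "('a::field^'n^'n) set"
  assumes "H \<subseteq> GL_field" "mat 1 \<in> H" "\<And>x y. x \<in> H \<Longrightarrow> y \<in> H \<Longrightarrow> x ** y \<in> H"
    "\<And>x. x \<in> H \<Longrightarrow> matrix_inv x \<in> H"
  shows "subgroup H (matrix_group GL_field)"
proof (rule subgroup.intro)
  fix x assume "x \<in> H"
  then have "x \<in> GL_field" using assms(1) by blast
  then show "inv\<^bsub>matrix_group GL_field\<^esub> x \<in> H"
    using assms(4) \<open>x \<in> H\<close> by (simp add: inv_matrix_group_GL)
qed (use assms in auto)

lemma group_matrix_group:
  "subgroup G (matrix_group GL_field) \<Longrightarrow> group (matrix_group (G :: ('a::field^'n^'n) set))"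
  using subgroup.subgroup_is_group[OF _ group_matrix_group_GL] by fastforce

lemma inv_matrix_group:
  fixes G :: "('a::field^'n^'n) set"
  assumes "subgroup G (matrix_group GL_field)" "x \<in> G"
  shows "inv\<^bsub>matrix_group G\<^esub> x = matrix_inv x"
  using group.m_inv_consistent[OF group_matrix_group_GL assms] subgroup.subset[OF assms(1)] assms(2)
  by (auto simp: inv_matrix_group_GL)

lemma matrix_subgroup_mult_closed:
  fixes G :: "('a::field^'n^'n) set"
  shows "subgroup G (matrix_group GL_field) \<Longrightarrow> x \<in> G \<Longrightarrow> y \<in> G \<Longrightarrow> x ** y \<in> G"
  using subgroup.m_closed by fastforce

lemma matrix_subgroup_inv_closed:
  fixes G :: "('a::field^'n^'n) set"
  assumes "subgroup G (matrix_group GL_field)" "x \<in> G"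
  shows "matrix_inv x \<in> G"
  using subgroup.m_inv_closed[OF assms] subgroup.subset[OF assms(1)] assms(2)
  by (auto simp: inv_matrix_group_GL)

lemma group_gen_subset:
  fixes H :: "('a::field^'n^'n) set"
  assumes "subgroup H (matrix_group GL_field)" "S \<subseteq> H"
  shows "group_gen S \<subseteq> H"
  unfolding group_gen_def
  using assms(2) subgroup.one_closed[OF assms(1)]
    matrix_subgroup_mult_closed[OF assms(1)] matrix_subgroup_inv_closed[OF assms(1)]
  by (intro Inter_lower) auto

lemma subgroup_group_gen:
  fixes S :: "('a::field^'n^'n) set"
  assumes "S \<subseteq> GL_field"
  shows "subgroup (group_gen S) (matrix_group GL_field)"
proof (rule subgroup_matrix_groupI)
  show "group_gen S \<subseteq> GL_field"
    using group_gen_subset[OF group.subgroup_self[OF group_matrix_group_GL, simplified] assms] by simp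
qed (auto simp: group_gen_def)

subsection \<open>Matrices over subrings and congruences modulo ideals\<close>

definition is_subring :: "'a::comm_ring_1 set \<Rightarrow> bool" where
  "is_subring R \<longleftrightarrow> 1 \<in> R \<and> (\<forall>x\<in>R. \<forall>y\<in>R. x + y \<in> R \<and> x - y \<in> R \<and> x * y \<in> R)"

lemma is_subring_subring_gen: "is_subring (subring_gen X)"
  unfolding is_subring_def subring_gen_def by auto

lemma zero_mem_subring: "is_subring R \<Longrightarrow> 0 \<in> R"
  unfolding is_subring_def by (metis diff_self)

lemma subset_subring_gen: "X \<subseteq> subring_gen X"
  unfolding subring_gen_def by auto

definition matrix_over :: "'a set \<Rightarrow> 'a^'n^'m \<Rightarrow> bool" where
  "matrix_over T A \<longleftrightarrow> (\<forall>i j. A $ i $ j \<in> T)"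

lemma matrix_over_mult:
  fixes A :: "'a::comm_ring_1^'n^'m" and B :: "'a^'p^'n"
  assumes "is_subring R" "matrix_over R A" "matrix_over R B"
  shows "matrix_over R (A ** B)"
  using assms zero_mem_subring[OF assms(1)]
  unfolding is_subring_def matrix_over_def matrix_matrix_mult_def
  by (auto intro!: sum_mem)

lemma matrix_over_mat_1: "is_subring R \<Longrightarrow> matrix_over R (mat 1 :: 'a::comm_ring_1^'n^'n)"
  using zero_mem_subring unfolding is_subring_def matrix_over_def mat_def by auto

lemma GL_ring_iff:
  "A \<in> GL_ring R \<longleftrightarrow> invertible A \<and> matrix_over R A \<and> matrix_over R (matrix_inv A)"
  by (simp add: GL_ring_def matrix_over_def)

lemma psi_kernel_iff: "A \<in> psi_kernel \<rho> M \<longleftrightarrow> A \<in> M \<and> matrix_over \<rho> (A - mat 1)"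
  by (simp add: psi_kernel_def matrix_over_def)

lemma subgroup_GL_ring:
  fixes R :: "'a::field set"
  assumes "is_subring R"
  shows "subgroup (GL_ring R :: ('a^'n^'n) set) (matrix_group GL_field)"
proof (rule subgroup_matrix_groupI)
  show "GL_ring R \<subseteq> GL_field" by (auto simp: GL_ring_def GL_field_def)
  show "mat 1 \<in> GL_ring R"
    using assms by (simp add: GL_ring_iff invertible_mat_1 matrix_inv_mat_1 matrix_over_mat_1)
  show "x ** y \<in> GL_ring R" if "x \<in> GL_ring R" "y \<in> GL_ring R" for x y
    using that assms by (simp add: GL_ring_iff invertible_mult matrix_inv_mult matrix_over_mult)
  show "matrix_inv x \<in> GL_ring R" if "x \<in> GL_ring R" for x
    using that by (simp add: GL_ring_iff invertible_matrix_inv matrix_inv_matrix_inv)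
qed

lemma matrix_over_ideal_mult_left:
  fixes A :: "'a::comm_ring_1^'n^'m" and B :: "'a^'p^'n"
  assumes "is_ideal R \<rho>" "matrix_over R A" "matrix_over \<rho> B"
  shows "matrix_over \<rho> (A ** B)"
  using assms unfolding is_ideal_def matrix_over_def matrix_matrix_mult_def
  by (auto intro!: sum_mem)

lemma matrix_over_ideal_mult_right:
  fixes A :: "'a::comm_ring_1^'n^'m" and B :: "'a^'p^'n"
  assumes "is_ideal R \<rho>" "matrix_over \<rho> A" "matrix_over R B"
  shows "matrix_over \<rho> (A ** B)"
  using assms unfolding is_ideal_def matrix_over_def matrix_matrix_mult_def
  by (auto intro!: sum_mem simp: mult.commute[of "A $ _ $ _"])

lemma matrix_over_ideal_diff:
  fixes A B :: "'a::comm_ring_1^'n^'m"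
  assumes "is_ideal R \<rho>" "matrix_over \<rho> A" "matrix_over \<rho> B"
  shows "matrix_over \<rho> (A - B)"
proof -
  have "A $ i $ j + - B $ i $ j \<in> \<rho>" for i j
    using assms unfolding is_ideal_def matrix_over_def by blast
  moreover have "(A - B) $ i $ j = A $ i $ j + - B $ i $ j" for i j
    by simp
  ultimately show ?thesis
    unfolding matrix_over_def by simp
qed

lemma commutator_congruent_mat_1:
  fixes g h :: "'a::field^'n^'n"
  assumes \<rho>: "is_ideal R \<rho>" and g: "g \<in> GL_ring R" and h: "h \<in> GL_ring R"
    and g1: "matrix_over \<rho> (g - mat 1)"
  shows "matrix_over \<rho> (g ** h ** matrix_inv g ** matrix_inv h - mat 1)"
proof -
  have R: "matrix_over R h" "matrix_over R (matrix_inv g)" "matrix_over R (matrix_inv h)"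
    using g h by (simp_all add: GL_ring_iff)
  have "g ** h ** matrix_inv g ** matrix_inv h - mat 1
      = (g - mat 1) ** h ** matrix_inv g ** matrix_inv h
        - h ** (matrix_inv g ** ((g - mat 1) ** matrix_inv h))"
    using g h by (simp add: GL_ring_iff matrix_diff_ldistrib matrix_diff_rdistrib matrix_mul_assoc matrix_inv)
  moreover have "matrix_over \<rho> ((g - mat 1) ** h ** matrix_inv g ** matrix_inv h)"
    using g1 R by (intro matrix_over_ideal_mult_right[OF \<rho>])
  moreover have "matrix_over \<rho> (h ** (matrix_inv g ** ((g - mat 1) ** matrix_inv h)))"
    using g1 R by (intro matrix_over_ideal_mult_left[OF \<rho>] matrix_over_ideal_mult_right[OF \<rho>])
  ultimately show ?thesis
    by (simp add: matrix_over_ideal_diff[OF \<rho>])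
qed

lemma inv_mult_congruent_mat_1:
  fixes g h :: "'a::field^'n^'n"
  assumes \<rho>: "is_ideal R \<rho>" and g: "g \<in> GL_ring R" and gh: "matrix_over \<rho> (h - g)"
  shows "matrix_over \<rho> (matrix_inv g ** h - mat 1)"
proof -
  have "matrix_inv g ** h - mat 1 = matrix_inv g ** (h - g)"
    using g by (simp add: GL_ring_iff matrix_diff_ldistrib matrix_inv)
  then show ?thesis
    using g gh by (simp add: GL_ring_iff matrix_over_ideal_mult_left[OF \<rho>])
qed

subsection \<open>Unipotent matrices of finite order\<close>

lemma mpow_mat_1_plus_mult:
  fixes N B :: "'a::comm_ring_1^'n^'n"
  assumes "N ** (N ** B) = 0"
  shows "mpow (mat 1 + N) k ** B = B + (N ** B) ** mat (of_nat k)"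
proof (induction k)
  case 0
  show ?case by simp
next
  case (Suc k)
  have "mpow (mat 1 + N) (Suc k) ** B = (mat 1 + N) ** (B + (N ** B) ** mat (of_nat k))"
    by (simp add: Suc.IH flip: matrix_mul_assoc)
  also have "\<dots> = B + (N ** B) ** (mat 1 + mat (of_nat k))"
    using assms by (simp add: matrix_add_ldistrib matrix_add_rdistrib matrix_mul_assoc)
  also have "\<dots> = B + (N ** B) ** mat (of_nat (Suc k))"
    by (simp add: mat_add)
  finally show ?case .
qed

lemma nilpotent_index_decrease:
  fixes N :: "'a::{idom, ring_char_0}^'n^'n"
  assumes "mpow (mat 1 + N) k = mat 1" "k > 0" "mpow N (Suc (Suc q)) = 0"
  shows "mpow N (Suc q) = 0"
proof -
  have "mpow (mat 1 + N) k ** mpow N q = mpow N q + mpow N (Suc q) ** mat (of_nat k)"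
    using assms(3) mpow_mat_1_plus_mult[of N "mpow N q" k] by simp
  then have "mpow N (Suc q) ** mat (of_nat k) = 0"
    using assms(1) by simp
  then show ?thesis
    using assms(2) by (simp add: vec_eq_iff matrix_mul_mat_component)
qed

lemma unipotent_finite_order_eq_mat_1:
  fixes A :: "'a::{idom, ring_char_0}^'n^'n"
  assumes "unipotent A" "finite_order A"
  shows "A = mat 1"
proof -
  define N where "N = A - mat 1"
  obtain k where k: "k > 0" "mpow (mat 1 + N) k = mat 1"
    using assms(2) by (auto simp: finite_order_def N_def)
  obtain p where p: "mpow N p = 0"
    using assms(1) by (auto simp: unipotent_def N_def)
  have "mpow N (Suc q) = 0 \<Longrightarrow> N = 0" for q
    by (induction q) (use k nilpotent_index_decrease in auto)
  moreover have "p \<noteq> 0"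
  proof
    assume "p = 0"
    then have "(mat 1 :: 'a^'n^'n) $ i $ i = 0 $ i $ i" for i using p by simp
    then show False by (simp add: mat_def)
  qed
  ultimately have "N = 0" using p not0_implies_Suc by blast
  then show ?thesis by (simp add: N_def)
qed

subsection \<open>Central-by-finite linear groups\<close>

lemma finite_image_if_factors:
  assumes "finite (f ` A)" and "\<And>x y. x \<in> A \<Longrightarrow> y \<in> A \<Longrightarrow> f x = f y \<Longrightarrow> g x = g y"
  shows "finite (g ` A)"
proof -
  have "g ` A = (\<lambda>b. g (inv_into A f b)) ` f ` A"
    unfolding image_image
  proof (rule image_cong)
    fix x assume x: "x \<in> A"
    then have "inv_into A f (f x) \<in> A" "f x = f (inv_into A f (f x))"
      by (simp_all add: inv_into_into f_inv_into_f)
    then show "g x = g (inv_into A f (f x))"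
      by (rule assms(2)[OF x])
  qed simp
  then show ?thesis using assms(1) by simp
qed

lemma centre_eq_center: "centre G = center (matrix_group G)"
  by (simp add: centre_def center_def)

lemma central_by_finite_iff:
  "central_by_finite G \<longleftrightarrow> finite (lcosets\<^bsub>matrix_group G\<^esub> (center (matrix_group G)))"
  unfolding central_by_finite_def centre_eq_center LCOSETS_def l_coset_def
  by (simp add: UNION_singleton_eq_range)

lemma psi_kernel_central_if_central_by_finite:
  fixes G :: "('a::field_char_0^'n^'n) set"
  assumes G: "subgroup G (matrix_group GL_field)" "G \<subseteq> GL_ring R"
    and \<rho>: "is_ideal R \<rho>"
    and SW: "\<forall>A \<in> psi_kernel \<rho> (GL_ring R :: ('a^'n^'n) set). finite_order A \<longrightarrow> unipotent A"
    and "central_by_finite G"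
  shows "psi_kernel \<rho> G \<subseteq> centre G"
proof
  interpret grp: finite_index_center "matrix_group G"
    using assms(5) group_matrix_group[OF G(1)]
    by (simp add: finite_index_center_def finite_index_center_axioms_def central_by_finite_iff)
  fix g assume "g \<in> psi_kernel \<rho> G"
  then have g: "g \<in> G" "matrix_over \<rho> (g - mat 1)" by (simp_all add: psi_kernel_iff)
  have "g ** h = h ** g" if h: "h \<in> G" for h
  proof -
    define c where "c = g ** h ** matrix_inv g ** matrix_inv h"
    have c_eq: "c = g \<otimes>\<^bsub>matrix_group G\<^esub> h \<otimes>\<^bsub>matrix_group G\<^esub> inv\<^bsub>matrix_group G\<^esub> g
        \<otimes>\<^bsub>matrix_group G\<^esub> inv\<^bsub>matrix_group G\<^esub> h"
      using g h by (simp add: c_def inv_matrix_group[OF G(1)])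
    obtain k where "k > 0" "mpow c k = mat 1"
      using grp.commutator_finite_order[of g h] g h by (auto simp: c_eq nat_pow_matrix_group)
    moreover have "c \<in> psi_kernel \<rho> (GL_ring R)"
    proof -
      have "c \<in> G"
        unfolding c_def
        using g h matrix_subgroup_mult_closed[OF G(1)] matrix_subgroup_inv_closed[OF G(1)] by simp
      moreover have "matrix_over \<rho> (c - mat 1)"
        unfolding c_def using commutator_congruent_mat_1[OF \<rho> _ _ g(2)] g h G(2) by blast
      ultimately show ?thesis using G(2) by (auto simp: psi_kernel_iff)
    qed
    ultimately have "c = mat 1"
      using SW unipotent_finite_order_eq_mat_1 by (auto simp: finite_order_def)
    then show ?thesis
      using grp.commute_if_commutator_eq_one[of g h] g h c_eq by simp
  qed
  then show "g \<in> centre G" using g by (simp add: centre_def)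
qed

lemma central_by_finite_if_psi_kernel_central:
  fixes G :: "('a::field^'n^'n) set"
  assumes G: "subgroup G (matrix_group GL_field)" "G \<subseteq> GL_ring R"
    and \<rho>: "is_ideal R \<rho>" "finite (quot_ring_carrier R \<rho>)"
    and central: "psi_kernel \<rho> G \<subseteq> centre G"
  shows "central_by_finite G"
proof -
  interpret grp: group "matrix_group G" using G(1) by (rule group_matrix_group)
  define residues where "residues A = (\<lambda>i j. {y \<in> R. A $ i $ j - y \<in> \<rho>})" for A :: "'a^'n^'n"
  have "residues ` G \<subseteq> (UNIV \<rightarrow>\<^sub>E UNIV \<rightarrow>\<^sub>E quot_ring_carrier R \<rho>)"
    using G(2) by (fastforce simp: residues_def quot_ring_carrier_def GL_ring_iff matrix_over_def)
  then have "finite (residues ` G)"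
    by (rule finite_subset) (simp add: finite_PiE \<rho>(2))
  moreover have "l_coset (matrix_group G) g (center (matrix_group G))
      = l_coset (matrix_group G) h (center (matrix_group G))"
    if gh: "g \<in> G" "h \<in> G" "residues g = residues h" for g h
  proof -
    have "0 \<in> \<rho>" using \<rho>(1) by (simp add: is_ideal_def)
    then have "g $ i $ j \<in> residues g i j" for i j
      using gh(1) G(2) by (auto simp: residues_def GL_ring_iff matrix_over_def)
    then have "g $ i $ j \<in> residues h i j" for i j
      using gh(3) by simp
    then have "matrix_over \<rho> (h - g)"
      by (simp add: residues_def matrix_over_def)
    moreover have "g \<in> GL_ring R" using gh(1) G(2) by blast
    ultimately have "matrix_inv g ** h \<in> psi_kernel \<rho> G"
      using inv_mult_congruent_mat_1[OF \<rho>(1)] gh(1,2)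
        matrix_subgroup_mult_closed[OF G(1)] matrix_subgroup_inv_closed[OF G(1)]
      by (simp add: psi_kernel_iff)
    then have "inv\<^bsub>matrix_group G\<^esub> g \<otimes>\<^bsub>matrix_group G\<^esub> h \<in> center (matrix_group G)"
      using central gh by (auto simp: inv_matrix_group[OF G(1)] centre_eq_center)
    then show ?thesis
      using grp.l_coset_eq_iff[OF grp.center_subgroup] gh by simp
  qed
  ultimately have "finite ((\<lambda>g. l_coset (matrix_group G) g (center (matrix_group G))) ` G)"
    by (rule finite_image_if_factors) auto
  then show ?thesis
    by (simp add: central_by_finite_iff LCOSETS_def UNION_singleton_eq_range)
qed

theorem corollary5p8:
  fixes S :: "('a::field_char_0^'n^'n) set" and \<rho> :: "'a set"
  assumes "finite S" and "S \<subseteq> GL_field"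
    and "R = subring_gen (entries (S \<union> matrix_inv ` S))"
    and "G = group_gen S"
    and "is_ideal R \<rho>"
    and "SW_hom R \<rho> TYPE('n)"
  shows "central_by_finite G \<longleftrightarrow> psi_kernel \<rho> G \<subseteq> centre G"
proof -
  have R: "is_subring R" using assms(3) is_subring_subring_gen by simp
  have "S \<subseteq> GL_ring R"
    using assms(2,3) subset_subring_gen
    by (fastforce simp: GL_ring_iff GL_field_def matrix_over_def entries_def)
  then have G: "subgroup G (matrix_group GL_field)" "G \<subseteq> GL_ring R"
    unfolding assms(4) using assms(2) subgroup_group_gen group_gen_subset[OF subgroup_GL_ring[OF R]]
    by blast+
  show ?thesis
    using assms(5,6) G psi_kernel_central_if_central_by_finite central_by_finite_if_psi_kernel_central
    unfolding SW_hom_def by blast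
qed

end
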